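(* Let $c_{\min}\le c_{\max}$ and $d_{\min}\le d_{\max}$ be integers and let $T=\{c_{\min},\dots,c_{\max}\}\times\{d_{\min},\dots,d_{\max}\}$. Let $a:T\to[0,1]$, $(c,d)\mapsto a_{c,d}$, and $p:T\to\mathbb{R}$, $(c,d)\mapsto p_{c,d}$. For $(c,d),(c',d')\in T$ write $(c,d)\to(c',d')$ for the inequality $$p_{c,d}-c\,a_{c,d}\;\ge\;p_{c',d'}-c\,a_{c',d'}.$$ Suppose that for every $(c,d)\in T$: (1) $(c,d)\to(c',d)$ holds for every $c'<c$; (2) $(c,d)\to(c',d)$ holds for every $c'>c$; (3) $(c,d)\to(c,d')$ holds for every $d'<d$ (all with the reported type in $T$). Then for every $(c,d)\in T$ and every $(c',d')\in T$ with $d'<d$ and $c'\neq c$ (i.e. both the case $c'<c,\ d'<d$ and the case $c'>c,\ d'<d$), the inequality $(c,d)\to(c',d')$ holds.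
   Context: Types $(c,d)$ consist of a forwarding cost $c$ and a predicted path duration $d$. $a_{c,d}$ is the (expected, interim) probability that a bidder reporting type $(c,d)$ wins, and $p_{c,d}$ its expected payment; a bidder with true type $(c,d)$ that wins with probability $a$ incurs expected cost $c\,a$. The inequality $(c,d)\to(c',d')$ is the incentive-compatibility constraint saying that a bidder of true type $(c,d)$ does not gain by reporting $(c',d')$. *)

theory Defs
  imports Main "HOL.Real"
begin

text \<open>The incentive-compatibility inequality (c,d) -> (c',d'):
  a bidder of true type (c,d) does not gain by reporting (c',d').\<close>
definition ic :: "(int \<Rightarrow> int \<Rightarrow> real) \<Rightarrow> (int \<Rightarrow> int \<Rightarrow> real) \<Rightarrow> int \<Rightarrow> int \<Rightarrow> int \<Rightarrow> int \<Rightarrow> bool" where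
  "ic a p c d c' d' \<longleftrightarrow> p c d - real_of_int c * a c d \<ge> p c' d' - real_of_int c * a c' d'"

end

theory Submission
  imports Defs
begin

text \<open>A deviation from (c,d) to (c',d') with d' < d factors through the report (c,d'):
  the true type (c,d) prefers itself to (c,d'), and the true type (c,d') prefers itself to
  (c',d'). Both comparisons are made with the same cost c, and the utility p - c a of a report
  does not depend on the true delay, so the two inequalities chain.\<close>

lemma ic_trans:
  assumes "ic a p c d c d1" and "ic a p c d1 c2 d2"
  shows "ic a p c d c2 d2"
  using assms unfolding ic_def by linarith

lemma ic_cost_deviation:
  assumes "\<forall>c\<in>C. \<forall>d\<in>D. \<forall>c'\<in>C. c' < c \<longrightarrow> ic a p c d c' d"
    and "\<forall>c\<in>C. \<forall>d\<in>D. \<forall>c'\<in>C. c' > c \<longrightarrow> ic a p c d c' d"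
    and "c \<in> C" and "d \<in> D" and "c' \<in> C" and "c' \<noteq> c"
  shows "ic a p c d c' d"
  using assms by (cases "c' < c") (auto simp: not_less_iff_gr_or_eq)

theorem lemma1:
  fixes cmin cmax dmin dmax :: int
    and a p :: "int \<Rightarrow> int \<Rightarrow> real"
  assumes "cmin \<le> cmax" and "dmin \<le> dmax"
    and a_range: "\<forall>c\<in>{cmin..cmax}. \<forall>d\<in>{dmin..dmax}. 0 \<le> a c d \<and> a c d \<le> 1"
    and ic1: "\<forall>c\<in>{cmin..cmax}. \<forall>d\<in>{dmin..dmax}. \<forall>c'\<in>{cmin..cmax}. c' < c \<longrightarrow> ic a p c d c' d"
    and ic2: "\<forall>c\<in>{cmin..cmax}. \<forall>d\<in>{dmin..dmax}. \<forall>c'\<in>{cmin..cmax}. c' > c \<longrightarrow> ic a p c d c' d"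
    and ic3: "\<forall>c\<in>{cmin..cmax}. \<forall>d\<in>{dmin..dmax}. \<forall>d'\<in>{dmin..dmax}. d' < d \<longrightarrow> ic a p c d c d'"
  shows "\<forall>c\<in>{cmin..cmax}. \<forall>d\<in>{dmin..dmax}. \<forall>c'\<in>{cmin..cmax}. \<forall>d'\<in>{dmin..dmax}.
           d' < d \<and> c' \<noteq> c \<longrightarrow> ic a p c d c' d'"
proof (intro ballI impI)
  fix c d c' d'
  assume c: "c \<in> {cmin..cmax}" and d: "d \<in> {dmin..dmax}" and c': "c' \<in> {cmin..cmax}"
    and d': "d' \<in> {dmin..dmax}" and dev: "d' < d \<and> c' \<noteq> c"
  have "ic a p c d c d'"
    using ic3 c d d' dev by blast
  moreover have "ic a p c d' c' d'"
    using ic_cost_deviation[OF ic1 ic2 c d' c'] dev by blast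
  ultimately show "ic a p c d c' d'"
    by (rule ic_trans)
qed

end
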